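(* For $n\geqslant1$, $m\geqslant0$, let $\mathfrak{g}_{n,m}$ be the number of inversion sequences of length $n$ avoiding both $010$ and $120$ with maximum value $m$ (so $\mathfrak{g}_{n,0}=1$). Then for all $n\geqslant 1$ and $m\geqslant1$, $$\mathfrak{g}_{n,m}=\sum_{p=m+1}^{n}\sum_{j=0}^{m-1}\mathfrak{g}_{p-1,j}\cdot\mathfrak{e}_{n-p,\,m-j},$$ where $\mathfrak{e}_{a,b}$ is the number of words of length $a$ over an alphabet $\{1,\dots,b\}$ avoiding $010$ and $120$ (with $\mathfrak{e}_{0,b}=1$, counting the empty word).
   Context: An inversion sequence of length $n$ is a sequence $(\sigma_1,\dots,\sigma_n)$ of integers with $0\leqslant\sigma_i<i$. A sequence contains a pattern $p$ if some subsequence is order-isomorphic to $p$; otherwise it avoids $p$. Avoiding $010$: no $i<j<l$ with $\sigma_i=\sigma_l<\sigma_j$. Avoiding $120$: no $i<j<l$ with $\sigma_l<\sigma_i<\sigma_j$. *)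

theory Defs
  imports Main
begin

text \<open>Sequences are lists of naturals, 0-indexed: position i (0-based) corresponds to
  sigma_(i+1), so the inversion condition 0 <= sigma_(i+1) < i+1 reads s!i <= i.\<close>

definition inversion_seq :: "nat list \<Rightarrow> bool" where
  "inversion_seq s \<longleftrightarrow> (\<forall>i < length s. s ! i < Suc i)"

definition contains_010 :: "nat list \<Rightarrow> bool" where
  "contains_010 s \<longleftrightarrow> (\<exists>i j l. i < j \<and> j < l \<and> l < length s \<and> s ! i = s ! l \<and> s ! l < s ! j)"

definition contains_120 :: "nat list \<Rightarrow> bool" where
  "contains_120 s \<longleftrightarrow> (\<exists>i j l. i < j \<and> j < l \<and> l < length s \<and> s ! l < s ! i \<and> s ! i < s ! j)"

definition avoids_010_120 :: "nat list \<Rightarrow> bool" where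
  "avoids_010_120 s \<longleftrightarrow> \<not> contains_010 s \<and> \<not> contains_120 s"

definition gcount :: "nat \<Rightarrow> nat \<Rightarrow> nat" where
  "gcount n m = card {s. length s = n \<and> inversion_seq s \<and> avoids_010_120 s \<and> Max (set s) = m}"

definition ecount :: "nat \<Rightarrow> nat \<Rightarrow> nat" where
  "ecount a b = card {w. length w = a \<and> set w \<subseteq> {1..b} \<and> avoids_010_120 w}"

end

theory Submission imports Defs begin

(* Cut a sequence s counted by g(n,m) at the first occurrence p of its maximum m.  As s_p < p,
   we have p > m, and the prefix is a counted inversion sequence of length p - 1 with some maximum
   j < m.  Every later entry lies in (j, m]: an entry y <= j after m would form j m j (010) or
   j m y (120).  Conversely no pattern straddles the prefix and the rest, whose values all exceed
   j, and a leading maximum m is never the first letter of a pattern, so the suffix after m, shifted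
   down by j, is an arbitrary avoiding word over {1..m-j}.  This bijection gives the sum. *)

definition contains_triple :: "(nat \<Rightarrow> nat \<Rightarrow> nat \<Rightarrow> bool) \<Rightarrow> nat list \<Rightarrow> bool" where
  "contains_triple Q s \<longleftrightarrow> (\<exists>i j l. i < j \<and> j < l \<and> l < length s \<and> Q (s!i) (s!j) (s!l))"

lemma contains_010_triple: "contains_010 s = contains_triple (\<lambda>x y z. x = z \<and> z < y) s"
  unfolding contains_010_def contains_triple_def by auto

lemma contains_120_triple: "contains_120 s = contains_triple (\<lambda>x y z. z < x \<and> x < y) s"
  unfolding contains_120_def contains_triple_def by auto

lemma contains_triple_appendI:
  assumes "contains_triple Q a \<or> contains_triple Q b"
  shows "contains_triple Q (a @ b)"
  using assms
proof
  assume "contains_triple Q a"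
  then obtain i j l where "i < j" "j < l" "l < length a" "Q (a!i) (a!j) (a!l)"
    unfolding contains_triple_def by blast
  then show ?thesis unfolding contains_triple_def
    by (intro exI[of _ i] exI[of _ j] exI[of _ l]) (auto simp: nth_append)
next
  assume "contains_triple Q b"
  then obtain i j l where "i < j" "j < l" "l < length b" "Q (b!i) (b!j) (b!l)"
    unfolding contains_triple_def by blast
  then show ?thesis unfolding contains_triple_def
    by (intro exI[of _ "i + length a"] exI[of _ "j + length a"] exI[of _ "l + length a"])
       (auto simp: nth_append)
qed

text \<open>A triple straddling the two blocks has its first entry below its last, which neither
  pattern allows.\<close>
lemma contains_triple_append_separated:
  assumes below: "\<forall>x\<in>set a. \<forall>y\<in>set b. x < y" and Q: "\<And>x y z. Q x y z \<Longrightarrow> \<not> x < z"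
  shows "contains_triple Q (a @ b) \<longleftrightarrow> contains_triple Q a \<or> contains_triple Q b"
proof
  assume "contains_triple Q (a @ b)"
  then obtain i j l where h: "i < j" "j < l" "l < length (a @ b)"
      "Q ((a @ b)!i) ((a @ b)!j) ((a @ b)!l)"
    unfolding contains_triple_def by blast
  consider "l < length a" | "length a \<le> i" | "i < length a" "length a \<le> l" by linarith
  then show "contains_triple Q a \<or> contains_triple Q b"
  proof cases
    case 1
    then have "contains_triple Q a" using h unfolding contains_triple_def
      by (intro exI[of _ i] exI[of _ j] exI[of _ l]) (auto simp: nth_append)
    then show ?thesis ..
  next
    case 2
    then have "contains_triple Q b" using h unfolding contains_triple_def
      by (intro exI[of _ "i - length a"] exI[of _ "j - length a"] exI[of _ "l - length a"])
         (auto simp: nth_append)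
    then show ?thesis ..
  next
    case 3
    then have "(a @ b)!i \<in> set a" "(a @ b)!l \<in> set b" using h by (auto simp: nth_append)
    then have "(a @ b)!i < (a @ b)!l" using below by blast
    with Q h(4) show ?thesis by blast
  qed
qed (rule contains_triple_appendI)

lemma contains_triple_Cons_max:
  assumes le: "\<forall>y\<in>set c. y \<le> m" and Q: "\<And>y z. y \<le> m \<Longrightarrow> z \<le> m \<Longrightarrow> \<not> Q m y z"
  shows "contains_triple Q (m # c) \<longleftrightarrow> contains_triple Q c"
proof
  assume "contains_triple Q (m # c)"
  then obtain i j l where h: "i < j" "j < l" "l < Suc (length c)"
      "Q ((m # c)!i) ((m # c)!j) ((m # c)!l)"
    unfolding contains_triple_def by auto
  show "contains_triple Q c"
  proof (cases i)
    case 0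
    have "(m # c)!j \<in> set c" "(m # c)!l \<in> set c" using h 0 by (auto simp: nth_Cons')
    with le Q h(4) 0 show ?thesis by fastforce
  next
    case (Suc i')
    then show ?thesis using h unfolding contains_triple_def
      by (intro exI[of _ i'] exI[of _ "j - 1"] exI[of _ "l - 1"]) (auto simp: nth_Cons')
  qed
qed (use contains_triple_appendI[of Q "[m]" c] in simp)

lemma contains_triple_map_add:
  assumes "\<And>x y z. Q (k + x) (k + y) (k + z) = Q x y z"
  shows "contains_triple Q (map ((+) k) w) = contains_triple Q w"
proof -
  have "Q (map ((+) k) w ! i) (map ((+) k) w ! j) (map ((+) k) w ! l) = Q (w!i) (w!j) (w!l)"
    if "i < j" "j < l" "l < length w" for i j l
    using that assms by simp
  then show ?thesis unfolding contains_triple_def by (metis length_map)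
qed

lemma avoids_append_separated:
  assumes "\<forall>x\<in>set a. \<forall>y\<in>set b. x < y"
  shows "avoids_010_120 (a @ b) \<longleftrightarrow> avoids_010_120 a \<and> avoids_010_120 b"
  unfolding avoids_010_120_def contains_010_triple contains_120_triple
  using contains_triple_append_separated[OF assms, of "\<lambda>x y z. x = z \<and> z < y"]
    contains_triple_append_separated[OF assms, of "\<lambda>x y z. z < x \<and> x < y"]
  by auto

lemma avoids_appendD: "avoids_010_120 (a @ b) \<Longrightarrow> avoids_010_120 a \<and> avoids_010_120 b"
  unfolding avoids_010_120_def contains_010_triple contains_120_triple
  using contains_triple_appendI by blast

lemma avoids_Cons_max:
  assumes "\<forall>y\<in>set c. y \<le> m"
  shows "avoids_010_120 (m # c) \<longleftrightarrow> avoids_010_120 c"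
  unfolding avoids_010_120_def contains_010_triple contains_120_triple
  using contains_triple_Cons_max[OF assms, of "\<lambda>x y z. x = z \<and> z < y"]
    contains_triple_Cons_max[OF assms, of "\<lambda>x y z. z < x \<and> x < y"]
  by auto

lemma avoids_map_add: "avoids_010_120 (map ((+) k) w) \<longleftrightarrow> avoids_010_120 w"
  unfolding avoids_010_120_def contains_010_triple contains_120_triple
  using contains_triple_map_add[of "\<lambda>x y z. x = z \<and> z < y" k w]
    contains_triple_map_add[of "\<lambda>x y z. z < x \<and> x < y" k w]
  by auto

text \<open>A later entry \<open>y \<le> j\<close> would form the pattern \<open>j m j\<close> (010) or \<open>j m y\<close> (120).\<close>
lemma avoids_suffix_above_prefix:
  assumes av: "avoids_010_120 (a @ m # c)" and j: "j \<in> set a" and jm: "j < m"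
  shows "\<forall>y\<in>set c. j < y"
proof (rule ccontr)
  let ?s = "a @ m # c"
  assume "\<not> (\<forall>y\<in>set c. j < y)"
  then obtain y where y: "y \<in> set c" "y \<le> j" by auto
  obtain i where i: "i < length a" "a ! i = j" using j by (metis in_set_conv_nth)
  obtain t where t: "t < length c" "c ! t = y" using y by (metis in_set_conv_nth)
  let ?k = "length a" and ?l = "length a + 1 + t"
  have pos: "i < ?k" "?k < ?l" "?l < length ?s" "?s ! i = j" "?s ! ?k = m" "?s ! ?l = y"
    using i t by (auto simp: nth_append)
  show False
  proof (cases "y = j")
    case True
    then have "contains_010 ?s"
      unfolding contains_010_def using pos jm
      by (intro exI[of _ i] exI[of _ ?k] exI[of _ ?l]) simp
    then show False using av unfolding avoids_010_120_def by simp
  next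
    case False
    then have "contains_120 ?s"
      unfolding contains_120_def using pos jm y(2)
      by (intro exI[of _ i] exI[of _ ?k] exI[of _ ?l]) simp
    then show False using av unfolding avoids_010_120_def by simp
  qed
qed

lemma inversion_seq_appendD: "inversion_seq (a @ b) \<Longrightarrow> inversion_seq a"
  unfolding inversion_seq_def by (metis length_append nth_append trans_less_add1)

lemma inversion_seq_append:
  assumes "inversion_seq a" and "\<forall>x\<in>set b. x \<le> length a"
  shows "inversion_seq (a @ b)"
  unfolding inversion_seq_def
proof (intro allI impI)
  fix i assume i: "i < length (a @ b)"
  show "(a @ b) ! i < Suc i"
  proof (cases "i < length a")
    case True
    then show ?thesis using assms(1) by (simp add: inversion_seq_def nth_append)
  next
    case False
    then have "(a @ b) ! i \<in> set b" using i by (simp add: nth_append)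
    then show ?thesis using assms(2) False by fastforce
  qed
qed

definition gseqs :: "nat \<Rightarrow> nat \<Rightarrow> nat list set" where
  "gseqs n m = {s. length s = n \<and> inversion_seq s \<and> avoids_010_120 s \<and> Max (set s) = m}"

definition ewords :: "nat \<Rightarrow> nat \<Rightarrow> nat list set" where
  "ewords a b = {w. length w = a \<and> set w \<subseteq> {1..b} \<and> avoids_010_120 w}"

lemma inversion_seq_set_less: "inversion_seq s \<Longrightarrow> set s \<subseteq> {..<length s}"
  unfolding inversion_seq_def by (auto simp: in_set_conv_nth less_Suc_eq_le) (use le_less_trans in blast)

lemma finite_gseqs: "finite (gseqs n m)"
  by (rule finite_subset[OF _ finite_lists_length_eq[OF finite_lessThan[of n], of n]])
     (auto simp: gseqs_def dest: inversion_seq_set_less)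

lemma finite_ewords: "finite (ewords a b)"
  by (rule finite_subset[OF _ finite_lists_length_eq[OF finite_atLeastAtMost[of 1 b], of a]])
     (auto simp: ewords_def)

text \<open>The position \<open>p\<close> of the theorem is \<open>length a + 1\<close>, and \<open>j\<close> is the maximum of \<open>a\<close>.\<close>
definition glue :: "nat \<Rightarrow> nat \<Rightarrow> nat list \<Rightarrow> nat list \<Rightarrow> nat list" where
  "glue m j a b = a @ m # map ((+) j) b"

lemma glue_mem_gseqs:
  assumes p: "m < p" "p \<le> n" and jm: "j < m"
    and a: "a \<in> gseqs (p - 1) j" and b: "b \<in> ewords (n - p) (m - j)"
  shows "glue m j a b \<in> gseqs n m"
proof -
  have a_props: "length a = p - 1" "inversion_seq a" "avoids_010_120 a" "Max (set a) = j"
    using a by (auto simp: gseqs_def)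
  have a_le: "\<forall>x\<in>set a. x \<le> j" using a_props(4) by (metis List.finite_set Max_ge)
  have b_props: "length b = n - p" "set b \<subseteq> {1..m - j}" "avoids_010_120 b"
    using b by (auto simp: ewords_def)
  let ?c = "map ((+) j) b"
  have c_range: "\<forall>y\<in>set ?c. j < y \<and> y \<le> m" using b_props(2) jm by fastforce
  have "length (glue m j a b) = n" using a_props(1) b_props(1) p by (simp add: glue_def)
  moreover have "inversion_seq (glue m j a b)"
    unfolding glue_def using inversion_seq_append[OF a_props(2), of "m # ?c"] c_range a_props(1) p
    by fastforce
  moreover have "avoids_010_120 (glue m j a b)"
  proof -
    have "\<forall>x\<in>set a. \<forall>y\<in>set (m # ?c). x < y" using a_le c_range jm by fastforce
    then show ?thesis unfolding glue_def
      using avoids_append_separated avoids_Cons_max[of ?c m] avoids_map_add c_range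
        a_props(3) b_props(3) by auto
  qed
  moreover have "Max (set (glue m j a b)) = m"
    using a_le c_range jm by (intro Max_eqI) (auto simp: glue_def)
  ultimately show ?thesis by (simp add: gseqs_def)
qed

lemma gseqs_decompose:
  assumes s: "s \<in> gseqs n m" and "1 \<le> n" "1 \<le> m"
  obtains p j a b where "m < p" "p \<le> n" "j < m" "a \<in> gseqs (p - 1) j"
    "b \<in> ewords (n - p) (m - j)" "s = glue m j a b"
proof -
  have s_props: "length s = n" "inversion_seq s" "avoids_010_120 s" "Max (set s) = m"
    using s by (auto simp: gseqs_def)
  then have "s \<noteq> []" using \<open>1 \<le> n\<close> by auto
  then have m_in: "m \<in> set s" and s_le: "\<forall>y\<in>set s. y \<le> m" using s_props(4) by auto
  obtain a c where s_eq: "s = a @ m # c" and m_notin: "m \<notin> set a"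
    using split_list_first[OF m_in] by blast
  have "length a < length s" using s_eq by simp
  with s_props(2) have "s ! length a < Suc (length a)" unfolding inversion_seq_def by blast
  then have m_le: "m \<le> length a" using s_eq by simp
  then have "a \<noteq> []" using \<open>1 \<le> m\<close> by auto
  define j where "j = Max (set a)"
  have j_in: "j \<in> set a" using \<open>a \<noteq> []\<close> by (simp add: j_def)
  have jm: "j < m" using j_in m_notin s_le s_eq by (metis Un_iff le_neq_implies_less set_append)
  have c_le: "\<forall>y\<in>set c. y \<le> m" using s_le s_eq by simp
  have c_gt: "\<forall>y\<in>set c. j < y"
    using avoids_suffix_above_prefix[OF _ j_in jm] s_props(3) s_eq by simp
  define b where "b = map (\<lambda>y. y - j) c"
  have c_eq: "c = map ((+) j) b" unfolding b_def using c_gt by (induction c) auto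
  have av: "avoids_010_120 a" "avoids_010_120 (m # c)"
    using avoids_appendD[of a "m # c"] s_props(3) s_eq by simp_all
  have "a \<in> gseqs (Suc (length a) - 1) j"
    using inversion_seq_appendD s_props(2) s_eq av(1) by (auto simp: gseqs_def j_def)
  moreover have "b \<in> ewords (n - Suc (length a)) (m - j)"
  proof -
    have "avoids_010_120 b" using av(2) avoids_Cons_max[OF c_le] avoids_map_add c_eq by simp
    moreover have "set b \<subseteq> {1..m - j}" using c_gt c_le by (fastforce simp: b_def)
    ultimately show ?thesis using s_props(1) s_eq by (simp add: ewords_def b_def)
  qed
  moreover have "Suc (length a) \<le> n" using s_props(1) s_eq by simp
  ultimately show thesis
    using m_le jm s_eq c_eq by (intro that[of "Suc (length a)" j a b]) (simp_all add: glue_def)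
qed

lemma append_Cons_eq_first_occurrence:
  assumes "x \<notin> set xs" "x \<notin> set xs'" "xs @ x # ys = xs' @ x # ys'"
  shows "xs = xs' \<and> ys = ys'"
  using assms
proof (induction xs arbitrary: xs')
  case Nil
  then show ?case by (cases xs') auto
next
  case (Cons y xs)
  then show ?case by (cases xs') auto
qed

lemma glue_inj:
  assumes "m \<notin> set a" "m \<notin> set a'" "Max (set a) = j" "Max (set a') = j'"
    and "glue m j a b = glue m j' a' b'"
  shows "a = a' \<and> j = j' \<and> b = b'"
proof -
  have "a = a'" and "map ((+) j) b = map ((+) j') b'"
    using append_Cons_eq_first_occurrence[OF assms(1,2)] assms(5) by (simp_all add: glue_def)
  moreover from \<open>a = a'\<close> have "j = j'" using assms(3,4) by simp
  ultimately show ?thesis by simp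
qed

definition glue_domain :: "nat \<Rightarrow> nat \<Rightarrow> ((nat \<times> nat) \<times> nat list \<times> nat list) set" where
  "glue_domain n m = (SIGMA (p, j):{m+1..n} \<times> {0..<m}. gseqs (p - 1) j \<times> ewords (n - p) (m - j))"

lemma mem_glue_domain:
  "((p, j), (a, b)) \<in> glue_domain n m \<longleftrightarrow>
    m < p \<and> p \<le> n \<and> j < m \<and> a \<in> gseqs (p - 1) j \<and> b \<in> ewords (n - p) (m - j)"
  by (auto simp: glue_domain_def)

lemma inj_on_glue: "inj_on (\<lambda>((p, j), (a, b)). glue m j a b) (glue_domain n m)"
proof (rule inj_onI)
  fix x y
  assume "x \<in> glue_domain n m" and "y \<in> glue_domain n m"
    and "(\<lambda>((p, j), (a, b)). glue m j a b) x = (\<lambda>((p, j), (a, b)). glue m j a b) y"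
  moreover obtain p j a b p' j' a' b' where xy: "x = ((p, j), (a, b))" "y = ((p', j'), (a', b'))"
    by (metis prod.collapse)
  ultimately have mem: "m < p" "j < m" "a \<in> gseqs (p - 1) j" "m < p'" "j' < m" "a' \<in> gseqs (p' - 1) j'"
    and eq: "glue m j a b = glue m j' a' b'"
    by (auto simp: mem_glue_domain)
  have props: "length a = p - 1" "Max (set a) = j" "length a' = p' - 1" "Max (set a') = j'"
    using mem(3,6) by (auto simp: gseqs_def)
  have "m \<notin> set a" "m \<notin> set a'"
    using mem(2,5) props(2,4) by (auto dest: Max_ge[OF List.finite_set])
  from glue_inj[OF this props(2,4) eq] props(1,3) mem(1,4)
  show "x = y" unfolding xy by auto
qed

lemma gseqs_eq_image_glue:
  assumes "1 \<le> n" "1 \<le> m"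
  shows "gseqs n m = (\<lambda>((p, j), (a, b)). glue m j a b) ` glue_domain n m"
    (is "_ = ?F ` ?T")
proof
  show "gseqs n m \<subseteq> ?F ` ?T"
  proof
    fix s assume "s \<in> gseqs n m"
    then obtain p j a b where "m < p" "p \<le> n" "j < m" "a \<in> gseqs (p - 1) j"
      "b \<in> ewords (n - p) (m - j)" "s = glue m j a b"
      using gseqs_decompose assms by blast
    then show "s \<in> ?F ` ?T" by (intro image_eqI[of _ _ "((p, j), (a, b))"]) (auto simp: mem_glue_domain)
  qed
  show "?F ` ?T \<subseteq> gseqs n m"
  proof (rule image_subsetI)
    fix x assume "x \<in> ?T"
    moreover obtain p j a b where x: "x = ((p, j), (a, b))" by (metis prod.collapse)
    ultimately have "m < p" "p \<le> n" "j < m" "a \<in> gseqs (p - 1) j" "b \<in> ewords (n - p) (m - j)"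
      by (simp_all add: mem_glue_domain)
    from glue_mem_gseqs[OF this] show "?F x \<in> gseqs n m" unfolding x by simp
  qed
qed

theorem mainTheorem7:
  fixes n m :: nat
  assumes "n \<ge> 1" and "m \<ge> 1"
  shows "gcount n m = (\<Sum>p = m+1..n. \<Sum>j = 0..<m. gcount (p - 1) j * ecount (n - p) (m - j))"
proof -
  have "gcount n m = card (gseqs n m)"
    by (simp add: gcount_def gseqs_def)
  also have "\<dots> = card (glue_domain n m)"
    unfolding gseqs_eq_image_glue[OF assms] by (rule card_image[OF inj_on_glue])
  also have "\<dots> = (\<Sum>(p, j)\<in>{m+1..n} \<times> {0..<m}. card (gseqs (p - 1) j) * card (ewords (n - p) (m - j)))"
    by (simp add: glue_domain_def card_cartesian_product finite_gseqs finite_ewords split_def)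
  also have "\<dots> = (\<Sum>p = m+1..n. \<Sum>j = 0..<m. gcount (p - 1) j * ecount (n - p) (m - j))"
    by (simp add: sum.cartesian_product gcount_def ecount_def gseqs_def ewords_def)
  finally show ?thesis .
qed

end
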